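(* Let $d=\infty$, $C>0$, and let ${\boldsymbol\gamma}$ be POD weights with parameters $a,p$ such that $\Gamma_1>0$, $p>a$ and $\sum_{j\in\mathbb N}\gamma_j<\infty$. Then ${\boldsymbol\gamma}\in\mathcal S_{\infty,C}$ and $$\mathrm{decay}(T^\uparrow_{\infty,C}{\boldsymbol\gamma})=\mathrm{decay}({\boldsymbol\gamma})=p.$$
   Context: $\mathcal U_\infty$ is the set of finite subsets of $\mathbb N$; weights are families $(\gamma_u)_{u\in\mathcal U_\infty}$ of non-negative reals. For a family $(a_v)_{v\in V}$ of non-negative reals indexed by a countably infinite set $V$, $\mathrm{decay}((a_v))=\sup\{\tau>0:\sum_{v\in V}a_v^{1/\tau}<\infty\}$ with $\sup\emptyset=0$. POD weights: $\gamma_u=\Gamma_{|u|}\prod_{j\in u}\gamma_j$ for a non-increasing sequence $(\gamma_j)_{j\in\mathbb N}$ of non-negative reals and non-negative $(\Gamma_k)_{k\ge0}$ with $\Gamma_k\le C_a(k!)^a$ for all $k$, some $a,C_a>0$; $p=\mathrm{decay}((\gamma_j)_{j\in\mathbb N})$. For $C>0$: $\mathcal S_{\infty,C}=\{{\boldsymbol\gamma}:\sum_vC^{2|v|}\gamma_v<\infty\}$ and $(T^\uparrow_{\infty,C}{\boldsymbol\gamma})_u=\sum_{v\in\mathcal U_\infty,\,v\supseteq u}C^{2|v|}\gamma_v$. *)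

theory Defs
  imports "HOL-Analysis.Analysis"
begin

definition U_inf :: "nat set set" where
  "U_inf = {u. finite u}"

text \<open>decay of a non-negative family indexed by V (extended real, since it may be infinite);
  sup of the empty set is taken to be 0.\<close>
definition decay :: "'a set \<Rightarrow> ('a \<Rightarrow> real) \<Rightarrow> ereal" where
  "decay V a = Sup (insert 0 {ereal \<tau> | \<tau>. \<tau> > 0 \<and> (\<lambda>v. a v powr (1 / \<tau>)) summable_on V})"

definition pod_weights :: "(nat \<Rightarrow> real) \<Rightarrow> (nat \<Rightarrow> real) \<Rightarrow> nat set \<Rightarrow> real" where
  "pod_weights Gam g u = Gam (card u) * (\<Prod>j\<in>u. g j)"

definition S_inf :: "real \<Rightarrow> (nat set \<Rightarrow> real) set" where
  "S_inf C = {w. (\<lambda>v. C ^ (2 * card v) * w v) summable_on U_inf}"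

definition T_up :: "real \<Rightarrow> (nat set \<Rightarrow> real) \<Rightarrow> nat set \<Rightarrow> real" where
  "T_up C w u = (\<Sum>\<^sub>\<infinity>v\<in>{v\<in>U_inf. u \<subseteq> v}. C ^ (2 * card v) * w v)"

end

theory Submission
  imports Defs
begin

(* Write P_M(u) = M^|u| (|u|!)^a prod_{j in u} g_j. Grouping the finite sets u by cardinality and
   bounding the elementary symmetric sums by k! e_k(c) <= exp(k sum c), the series sum_u P_M(u)^(1/tau)
   is dominated by sum_k R^k (k!)^(a/tau - 1), which converges as soon as tau > a and
   sum_j g_j^(1/tau) < infinity; hence decay(P_M) = decay(g), the upper bound coming from the
   singletons. The growth bound on Gamma together with (m+n)! <= 2^(m+n) m! n! gives
   C^(2|v|) gamma_v <= C_a P_M(u) P_M(v - u) for u contained in v and suitable M. Taking u = {}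
   yields gamma in S and decay(gamma) >= decay(g); summing over all v containing u yields
   (T gamma)_u <= C_a (sum P_M) P_M(u), so decay(T gamma) >= decay(g). The reverse inequalities
   again come from the singletons, where gamma_{j} = Gamma_1 g_j with Gamma_1 > 0. *)

lemma decay_nonneg: "0 \<le> decay V f"
  unfolding decay_def by (intro Sup_upper) simp

lemma decay_geI:
  assumes "0 < \<tau>" and "(\<lambda>v. f v powr (1 / \<tau>)) summable_on V"
  shows "ereal \<tau> \<le> decay V f"
  unfolding decay_def using assms by (intro Sup_upper) auto

lemma decay_gtE:
  assumes "ereal a < decay V f" and "0 \<le> a"
  obtains \<tau> where "a < \<tau>" and "(\<lambda>v. f v powr (1 / \<tau>)) summable_on V"
  using assms unfolding decay_def less_Sup_iff by auto

lemma decay_le_decayI: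
  assumes "ereal a < decay V f"
    and "\<And>\<tau>. a < \<tau> \<Longrightarrow> 0 < \<tau> \<Longrightarrow> (\<lambda>v. f v powr (1 / \<tau>)) summable_on V
            \<Longrightarrow> (\<lambda>w. h w powr (1 / \<tau>)) summable_on W"
  shows "decay V f \<le> decay W h"
proof (rule dense_le_bounded[OF assms(1)])
  fix x assume "ereal a < x" "x < decay V f"
  then obtain y where "y \<in> insert 0 {ereal \<tau> |\<tau>. 0 < \<tau> \<and> (\<lambda>v. f v powr (1 / \<tau>)) summable_on V}"
    and "x < y"
    unfolding decay_def less_Sup_iff by blast
  then consider "y = 0" | \<tau> where "y = ereal \<tau>" "0 < \<tau>" "(\<lambda>v. f v powr (1 / \<tau>)) summable_on V"
    by blast
  then show "x \<le> decay W h"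
  proof cases
    case 1
    then show ?thesis using \<open>x < y\<close> decay_nonneg[of W h] by simp
  next
    case 2
    then have "ereal a < ereal \<tau>" using \<open>ereal a < x\<close> \<open>x < y\<close> by order
    then have "a < \<tau>" by simp
    with 2 have "ereal \<tau> \<le> decay W h" by (intro decay_geI assms(2))
    then show ?thesis using \<open>x < y\<close> 2 by simp
  qed
qed

lemma decay_le_decay_of_le_mult:
  assumes "\<And>w. w \<in> W \<Longrightarrow> 0 \<le> h w" and "\<And>w. w \<in> W \<Longrightarrow> h w \<le> K * f w" and "0 \<le> K"
  shows "decay W f \<le> decay W h"
proof -
  have "(\<lambda>w. h w powr (1 / \<tau>)) summable_on W"
    if "0 < \<tau>" and f_summable: "(\<lambda>w. f w powr (1 / \<tau>)) summable_on W" for \<tau> :: real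
  proof (rule summable_on_comparison_test[OF summable_on_cmult_right[OF f_summable]])
    fix w assume w: "w \<in> W"
    have "h w powr (1 / \<tau>) \<le> (K * f w) powr (1 / \<tau>)"
      using assms w \<open>0 < \<tau>\<close> by (intro powr_mono2) auto
    also have "\<dots> = K powr (1 / \<tau>) * f w powr (1 / \<tau>)"
      using assms(1,2)[OF w] \<open>0 \<le> K\<close> by (simp add: powr_mult zero_le_mult_iff)
    finally show "h w powr (1 / \<tau>) \<le> K powr (1 / \<tau>) * f w powr (1 / \<tau>)" .
  qed simp
  then show ?thesis
    unfolding decay_def by (intro Sup_subset_mono insert_mono) auto
qed

lemma decay_le_decay_reindex:
  assumes "inj_on h A" and "h ` A \<subseteq> V"
  shows "decay V f \<le> decay A (f \<circ> h)"
proof -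
  have "(\<lambda>v. (f \<circ> h) v powr (1 / \<tau>)) summable_on A"
    if "(\<lambda>v. f v powr (1 / \<tau>)) summable_on V" for \<tau> :: real
    using summable_on_subset[OF that assms(2)]
      summable_on_reindex[OF assms(1), of "\<lambda>v. f v powr (1 / \<tau>)"] by (simp add: o_def)
  then show ?thesis
    unfolding decay_def by (intro Sup_subset_mono insert_mono) auto
qed

lemma decay_U_inf_le_decay_singletons:
  assumes "0 < \<kappa>" and "\<And>j. 0 \<le> g j" and "\<And>j. \<kappa> * g j \<le> y {j}"
  shows "decay U_inf y \<le> decay UNIV g"
proof -
  have "decay U_inf y \<le> decay UNIV (\<lambda>j. y {j})"
    by (rule decay_le_decay_reindex[of "\<lambda>j. {j}" UNIV U_inf y, unfolded o_def])
      (auto simp: inj_on_def U_inf_def)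
  also have "\<dots> \<le> decay UNIV g"
  proof (rule decay_le_decay_of_le_mult)
    fix j :: nat
    show "g j \<le> 1 / \<kappa> * y {j}"
      using assms(1) assms(3)[of j] by (simp add: field_simps)
  qed (use assms(1,2) in auto)
  finally show ?thesis .
qed

lemma powr_summable_on_mono:
  fixes y :: "'a \<Rightarrow> real"
  assumes "\<And>x. x \<in> A \<Longrightarrow> 0 \<le> y x" and "0 < s" and "s \<le> t"
    and s_summable: "(\<lambda>x. y x powr s) summable_on A"
  shows "(\<lambda>x. y x powr t) summable_on A"
proof -
  define K where "K = infsum (\<lambda>x. y x powr s) A powr ((t - s) / s)"
  show ?thesis
  proof (rule summable_on_comparison_test[OF summable_on_cmult_right[OF s_summable, of K]])
    fix x assume x: "x \<in> A"
    have "y x powr s \<le> infsum (\<lambda>x. y x powr s) A"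
      using finite_sum_le_infsum[OF s_summable, of "{x}"] x by simp
    then have "(y x powr s) powr ((t - s) / s) \<le> K"
      unfolding K_def using assms by (intro powr_mono2) auto
    moreover have "y x powr t = y x powr s * (y x powr s) powr ((t - s) / s)"
      using \<open>0 < s\<close> by (simp add: powr_powr flip: powr_add)
    ultimately show "y x powr t \<le> K * y x powr s"
      by (metis mult.commute mult_left_mono powr_ge_zero)
  qed simp
qed

lemma fact_mult_sum_card_subsets_prod_le:
  fixes c :: "'a \<Rightarrow> real"
  assumes "finite A" and "\<And>j. j \<in> A \<Longrightarrow> 0 \<le> c j"
  shows "fact k * (\<Sum>X | X \<subseteq> A \<and> card X = k. \<Prod>j\<in>X. c j) \<le> exp (sum c A) ^ k"
proof -
  \<comment> \<open>Compare with the coefficient of t^k in prod (1 + t c_j) <= exp (t sum c), at t = k.\<close>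
  let ?S = "{X. X \<subseteq> A \<and> card X = k}"
  have prod_nonneg: "0 \<le> (\<Prod>j\<in>X. t * c j)" if "X \<subseteq> A" "0 \<le> t" for X t
    using that assms(2) by (intro prod_nonneg) (auto simp: subset_iff)
  have "fact k * (\<Sum>X\<in>?S. \<Prod>j\<in>X. c j) \<le> real k ^ k * (\<Sum>X\<in>?S. \<Prod>j\<in>X. c j)"
    using fact_le_power[of k] prod_nonneg[of _ 1]
    by (intro mult_right_mono sum_nonneg) (auto simp: of_nat_power)
  also have "\<dots> = (\<Sum>X\<in>?S. \<Prod>j\<in>X. real k * c j)"
    by (simp add: sum_distrib_left prod.distrib)
  also have "\<dots> \<le> (\<Sum>X\<in>Pow A. \<Prod>j\<in>X. real k * c j)"
    using assms(1) prod_nonneg by (intro sum_mono2) auto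
  also have "\<dots> = (\<Prod>j\<in>A. real k * c j + 1)"
    using prod_add[OF assms(1), of "\<lambda>j. real k * c j" "\<lambda>_. 1"] by simp
  also have "\<dots> \<le> (\<Prod>j\<in>A. exp (real k * c j))"
    using assms(2) exp_ge_add_one_self by (intro prod_mono) (auto simp: add.commute)
  also have "\<dots> = exp (sum c A) ^ k"
    using assms(1) by (simp add: exp_sum sum_distrib_left exp_of_nat_mult prod_power_distrib)
  finally show ?thesis .
qed

lemma card_prod_summable_on_U_inf:
  fixes c f :: "nat \<Rightarrow> real"
  assumes c_nonneg: "\<And>j. 0 \<le> c j" and f_nonneg: "\<And>k. 0 \<le> f k" and "summable c"
    and f_summable: "summable (\<lambda>k. f k * exp (suminf c) ^ k / fact k)"
  shows "(\<lambda>u. f (card u) * (\<Prod>j\<in>u. c j)) summable_on U_inf"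
proof (rule nonneg_bdd_above_summable_on)
  show "0 \<le> f (card u) * (\<Prod>j\<in>u. c j)" for u
    using assms by (simp add: prod_nonneg)
  show "bdd_above (sum (\<lambda>u. f (card u) * (\<Prod>j\<in>u. c j)) ` {F. F \<subseteq> U_inf \<and> finite F})"
  proof (rule bdd_aboveI2)
    fix F assume F: "F \<in> {F. F \<subseteq> U_inf \<and> finite F}"
    define A where "A = \<Union>F"
    have "F \<subseteq> Pow A" and "finite A"
      using F by (auto simp: A_def U_inf_def)
    have "(\<Sum>u\<in>F. f (card u) * (\<Prod>j\<in>u. c j)) \<le> (\<Sum>u\<in>Pow A. f (card u) * (\<Prod>j\<in>u. c j))"
      using \<open>F \<subseteq> Pow A\<close> \<open>finite A\<close> assms by (intro sum_mono2) (auto simp: prod_nonneg)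
    also have "\<dots> = (\<Sum>k\<le>card A. f k * (\<Sum>X | X \<subseteq> A \<and> card X = k. \<Prod>j\<in>X. c j))"
      unfolding sum_distrib_left using \<open>finite A\<close>
      by (subst sum.group[symmetric, of _ _ card]) (auto intro: card_mono intro!: sum.cong)
    also have "\<dots> \<le> (\<Sum>k\<le>card A. f k * exp (suminf c) ^ k / fact k)"
    proof (intro sum_mono)
      fix k
      let ?e = "\<Sum>X | X \<subseteq> A \<and> card X = k. \<Prod>j\<in>X. c j"
      have "fact k * ?e \<le> exp (sum c A) ^ k"
        using \<open>finite A\<close> c_nonneg by (rule fact_mult_sum_card_subsets_prod_le)
      also have "\<dots> \<le> exp (suminf c) ^ k"
        using \<open>finite A\<close> c_nonneg \<open>summable c\<close> by (intro power_mono) (auto intro: sum_le_suminf)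
      finally have "f k * (fact k * ?e) \<le> f k * exp (suminf c) ^ k"
        by (rule mult_left_mono[OF _ f_nonneg])
      then show "f k * ?e \<le> f k * exp (suminf c) ^ k / fact k"
        by (simp add: field_simps)
    qed
    also have "\<dots> \<le> (\<Sum>k. f k * exp (suminf c) ^ k / fact k)"
      using f_summable f_nonneg by (intro sum_le_suminf) auto
    finally show "(\<Sum>u\<in>F. f (card u) * (\<Prod>j\<in>u. c j)) \<le> (\<Sum>k. f k * exp (suminf c) ^ k / fact k)" .
  qed
qed

lemma summable_power_mult_fact_powr:
  fixes r b :: real
  assumes "b < 1" and "0 \<le> r"
  shows "summable (\<lambda>k. r ^ k * fact k powr (b - 1))"
proof -
  have "((\<lambda>k. real (Suc k) powr (b - 1)) \<longlongrightarrow> 0) sequentially"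
    using assms(1) filterlim_compose[OF filterlim_real_sequentially filterlim_Suc]
    by (intro tendsto_neg_powr) auto
  then have "((\<lambda>k. r * real (Suc k) powr (b - 1)) \<longlongrightarrow> 0) sequentially"
    by (rule tendsto_mult_right_zero)
  then have "eventually (\<lambda>k. r * real (Suc k) powr (b - 1) < 1 / 2) sequentially"
    by (rule order_tendstoD) simp
  then obtain N where N: "\<And>k. N \<le> k \<Longrightarrow> r * real (Suc k) powr (b - 1) < 1 / 2"
    unfolding eventually_sequentially by blast
  show ?thesis
  proof (rule summable_ratio_test[of "1 / 2" N])
    fix k assume "N \<le> k"
    have "r ^ Suc k * fact (Suc k) powr (b - 1)
        = (r * real (Suc k) powr (b - 1)) * (r ^ k * fact k powr (b - 1))"
      by (simp add: powr_mult mult_ac del: of_nat_Suc)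
    also have "\<dots> \<le> 1 / 2 * (r ^ k * fact k powr (b - 1))"
      using N[OF \<open>N \<le> k\<close>] assms(2) by (intro mult_right_mono) auto
    finally show "norm (r ^ Suc k * fact (Suc k) powr (b - 1)) \<le> 1 / 2 * norm (r ^ k * fact k powr (b - 1))"
      using assms(2) by simp
  qed simp
qed

lemma pod_weights_nonneg:
  assumes "\<And>k. 0 \<le> Gam k" and "\<And>j. 0 \<le> g j"
  shows "0 \<le> pod_weights Gam g u"
  using assms by (simp add: pod_weights_def prod_nonneg)

lemma powr_pod_weights_fact_powr_summable_on:
  fixes g :: "nat \<Rightarrow> real"
  assumes g_nonneg: "\<And>j. 0 \<le> g j" and "0 < M" and "0 < \<tau>" and "a < \<tau>"
    and g_summable: "(\<lambda>j. g j powr (1 / \<tau>)) summable_on UNIV"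
  shows "(\<lambda>u. pod_weights (\<lambda>k. M ^ k * fact k powr a) g u powr (1 / \<tau>)) summable_on U_inf"
proof -
  define c where "c = (\<lambda>j. g j powr (1 / \<tau>))"
  define f where "f k = (M powr (1 / \<tau>)) ^ k * fact k powr (a / \<tau>)" for k
  have "summable c"
    using g_summable summable_on_UNIV_nonneg_real_iff[of c] by (simp add: c_def)
  have "summable (\<lambda>k. (M powr (1 / \<tau>) * exp (suminf c)) ^ k * fact k powr (a / \<tau> - 1))"
    using \<open>a < \<tau>\<close> \<open>0 < \<tau>\<close> by (intro summable_power_mult_fact_powr) auto
  then have "summable (\<lambda>k. f k * exp (suminf c) ^ k / fact k)"
    by (simp add: f_def powr_diff power_mult_distrib mult_ac)
  then have "(\<lambda>u. f (card u) * (\<Prod>j\<in>u. c j)) summable_on U_inf"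
    using g_nonneg \<open>summable c\<close> by (intro card_prod_summable_on_U_inf) (auto simp: c_def f_def)
  moreover have "pod_weights (\<lambda>k. M ^ k * fact k powr a) g u powr (1 / \<tau>) = f (card u) * (\<Prod>j\<in>u. c j)"
    for u
    using \<open>0 < M\<close> g_nonneg
    by (simp add: pod_weights_def f_def c_def powr_mult prod_nonneg prod_powr_distrib powr_powr
        flip: powr_realpow)
  ultimately show ?thesis
    by simp
qed

lemma decay_pod_weights_fact_powr:
  fixes g :: "nat \<Rightarrow> real"
  assumes g_nonneg: "\<And>j. 0 \<le> g j" and "0 < M" and "ereal a < decay UNIV g"
  shows "decay U_inf (pod_weights (\<lambda>k. M ^ k * fact k powr a) g) = decay UNIV g"
proof (rule antisym)
  show "decay U_inf (pod_weights (\<lambda>k. M ^ k * fact k powr a) g) \<le> decay UNIV g"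
    using \<open>0 < M\<close> g_nonneg by (intro decay_U_inf_le_decay_singletons) (auto simp: pod_weights_def)
  show "decay UNIV g \<le> decay U_inf (pod_weights (\<lambda>k. M ^ k * fact k powr a) g)"
  proof (rule decay_le_decayI[OF assms(3)])
    fix \<tau> :: real assume "a < \<tau>" "0 < \<tau>" "(\<lambda>j. g j powr (1 / \<tau>)) summable_on UNIV"
    then show "(\<lambda>u. pod_weights (\<lambda>k. M ^ k * fact k powr a) g u powr (1 / \<tau>)) summable_on U_inf"
      by (intro powr_pod_weights_fact_powr_summable_on[OF g_nonneg \<open>0 < M\<close>])
  qed
qed

lemma pod_weights_fact_powr_summable_on:
  fixes g :: "nat \<Rightarrow> real"
  assumes g_nonneg: "\<And>j. 0 \<le> g j" and "summable g" and "0 < M" and "0 \<le> a"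
    and "ereal a < decay UNIV g"
  shows "pod_weights (\<lambda>k. M ^ k * fact k powr a) g summable_on U_inf"
proof -
  define P where "P = pod_weights (\<lambda>k. M ^ k * fact k powr a) g"
  have P_nonneg: "0 \<le> P u" for u
    unfolding P_def using \<open>0 < M\<close> by (intro pod_weights_nonneg g_nonneg) simp
  obtain \<tau> where "a < \<tau>" and \<tau>_summable: "(\<lambda>j. g j powr (1 / \<tau>)) summable_on UNIV"
    using decay_gtE[OF assms(5,4)] .
  define \<tau>' where "\<tau>' = max 1 \<tau>"
  have "0 < \<tau>'" "a < \<tau>'" "1 \<le> \<tau>'"
    using \<open>a < \<tau>\<close> by (auto simp: \<tau>'_def)
  have "(\<lambda>j. g j powr (1 / \<tau>')) summable_on UNIV"
  proof (cases "\<tau> \<le> 1")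
    case True
    then show ?thesis
      using \<open>summable g\<close> g_nonneg summable_on_UNIV_nonneg_real_iff[of g] by (simp add: \<tau>'_def)
  qed (use \<tau>_summable in \<open>simp add: \<tau>'_def\<close>)
  then have P_powr_summable: "(\<lambda>u. P u powr (1 / \<tau>')) summable_on U_inf"
    unfolding P_def
    by (rule powr_pod_weights_fact_powr_summable_on[OF g_nonneg \<open>0 < M\<close> \<open>0 < \<tau>'\<close> \<open>a < \<tau>'\<close>])
  have "(\<lambda>u. P u powr 1) summable_on U_inf"
    using P_nonneg \<open>1 \<le> \<tau>'\<close> by (intro powr_summable_on_mono[OF _ _ _ P_powr_summable]) auto
  then show ?thesis
    using P_nonneg by (simp add: P_def)
qed

lemma fact_add_le: "(fact (m + n) :: real) \<le> 2 ^ (m + n) * fact m * fact n"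
proof -
  have "fact m * fact n * (m + n choose m) = fact (m + n)"
    using binomial_fact_lemma[of m "m + n"] by simp
  moreover have "fact m * fact n * (m + n choose m) \<le> fact m * fact n * 2 ^ (m + n)"
    by (intro mult_left_mono binomial_le_pow2) simp
  ultimately have "real (fact (m + n)) \<le> real (fact m * fact n * 2 ^ (m + n))"
    by (simp only: of_nat_le_iff)
  then show ?thesis
    by (simp add: mult_ac)
qed

lemma fact_add_powr_le:
  assumes "0 \<le> a"
  shows "(fact (m + n) :: real) powr a \<le> (2 powr a) ^ (m + n) * fact m powr a * fact n powr a"
proof -
  have "(fact (m + n) :: real) powr a \<le> (2 ^ (m + n) * fact m * fact n) powr a"
    using assms by (intro powr_mono2 fact_add_le) auto
  also have "\<dots> = (2 powr a) ^ (m + n) * fact m powr a * fact n powr a"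
    by (simp add: powr_mult powr_powr powr_power mult.commute flip: powr_realpow)
  finally show ?thesis .
qed

lemma pod_weights_split_le:
  fixes Gam g :: "nat \<Rightarrow> real"
  assumes g_nonneg: "\<And>j. 0 \<le> g j" and Gam_le: "\<And>k. Gam k \<le> Ca * fact k powr a"
    and "0 \<le> Ca" and "0 \<le> a" and "0 \<le> B" and "B * 2 powr a \<le> M"
    and "u \<subseteq> v" and "finite v"
  shows "B ^ card v * pod_weights Gam g v
    \<le> Ca * pod_weights (\<lambda>k. M ^ k * fact k powr a) g u * pod_weights (\<lambda>k. M ^ k * fact k powr a) g (v - u)"
proof -
  define m where "m = card u"
  define n where "n = card (v - u)"
  define X where "X = (\<Prod>j\<in>u. g j) * (\<Prod>j\<in>v - u. g j)"
  have "finite u"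
    using \<open>u \<subseteq> v\<close> \<open>finite v\<close> finite_subset by blast
  then have "card v = m + n"
    using \<open>u \<subseteq> v\<close> \<open>finite v\<close> by (simp add: m_def n_def card_Diff_subset card_mono)
  have "(\<Prod>j\<in>v. g j) = X"
    using prod.subset_diff[OF \<open>u \<subseteq> v\<close> \<open>finite v\<close>] by (simp add: X_def mult.commute)
  have "0 \<le> X"
    using g_nonneg by (simp add: X_def prod_nonneg)
  have "B ^ (m + n) * Gam (m + n) \<le> B ^ (m + n) * (Ca * fact (m + n) powr a)"
    using \<open>0 \<le> B\<close> by (intro mult_left_mono Gam_le) simp
  also have "\<dots> \<le> B ^ (m + n) * (Ca * ((2 powr a) ^ (m + n) * fact m powr a * fact n powr a))"
    using \<open>0 \<le> B\<close> \<open>0 \<le> Ca\<close>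
    by (intro mult_left_mono fact_add_powr_le \<open>0 \<le> a\<close>) simp_all
  also have "\<dots> = Ca * (B * 2 powr a) ^ (m + n) * (fact m powr a * fact n powr a)"
    by (simp add: power_mult_distrib mult_ac)
  also have "\<dots> \<le> Ca * M ^ (m + n) * (fact m powr a * fact n powr a)"
    using \<open>0 \<le> B\<close> \<open>0 \<le> Ca\<close> \<open>B * 2 powr a \<le> M\<close>
    by (intro mult_right_mono[OF mult_left_mono[OF power_mono]]) simp_all
  finally have Gam_bound: "B ^ (m + n) * Gam (m + n) \<le> Ca * M ^ (m + n) * (fact m powr a * fact n powr a)" .
  have "B ^ card v * pod_weights Gam g v = B ^ (m + n) * Gam (m + n) * X"
    unfolding pod_weights_def \<open>card v = m + n\<close> \<open>(\<Prod>j\<in>v. g j) = X\<close> by (simp only: mult.assoc)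
  also have "\<dots> \<le> Ca * M ^ (m + n) * (fact m powr a * fact n powr a) * X"
    using Gam_bound \<open>0 \<le> X\<close> by (rule mult_right_mono)
  also have "\<dots> = Ca * pod_weights (\<lambda>k. M ^ k * fact k powr a) g u
      * pod_weights (\<lambda>k. M ^ k * fact k powr a) g (v - u)"
    unfolding pod_weights_def X_def m_def n_def power_add by (simp only: mult_ac)
  finally show ?thesis .
qed

lemma T_up_nonneg:
  assumes "\<And>v. 0 \<le> w v"
  shows "0 \<le> T_up C w u"
  unfolding T_up_def using assms by (intro infsum_nonneg) (simp add: power_mult)

lemma T_up_ge:
  assumes "w \<in> S_inf C" and "\<And>v. 0 \<le> w v" and "u \<in> U_inf"
  shows "C ^ (2 * card u) * w u \<le> T_up C w u"
proof -
  have "(\<lambda>v. C ^ (2 * card v) * w v) summable_on {v \<in> U_inf. u \<subseteq> v}"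
    using assms(1) unfolding S_inf_def by (auto intro: summable_on_subset)
  then show ?thesis
    unfolding T_up_def using assms(2,3)
    by (intro finite_sum_le_infsum[where B = "{u}", simplified]) (auto simp: power_mult)
qed

lemma T_up_le:
  fixes w P :: "nat set \<Rightarrow> real"
  assumes "\<And>v. 0 \<le> w v" and "\<And>v. 0 \<le> P v" and P_summable: "P summable_on U_inf" and "0 \<le> K"
    and bound: "\<And>v. u \<subseteq> v \<Longrightarrow> finite v \<Longrightarrow> C ^ (2 * card v) * w v \<le> K * P u * P (v - u)"
  shows "T_up C w u \<le> K * infsum P U_inf * P u"
proof -
  define V where "V = {v \<in> U_inf. u \<subseteq> v}"
  have inj: "inj_on (\<lambda>v. v - u) V"
    unfolding V_def inj_on_def by blast
  have shifts: "(\<lambda>v. v - u) ` V \<subseteq> U_inf"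
    by (auto simp: V_def U_inf_def)
  have "(\<lambda>v. P (v - u)) summable_on V"
    using summable_on_subset[OF P_summable shifts] summable_on_reindex[OF inj, of P] by (simp add: o_def)
  then have bound_summable: "(\<lambda>v. K * P u * P (v - u)) summable_on V"
    by (rule summable_on_cmult_right)
  have "T_up C w u = (\<Sum>\<^sub>\<infinity>v\<in>V. C ^ (2 * card v) * w v)"
    unfolding T_up_def V_def ..
  also have "\<dots> \<le> (\<Sum>\<^sub>\<infinity>v\<in>V. K * P u * P (v - u))"
  proof (rule infsum_mono[OF _ bound_summable])
    show "C ^ (2 * card v) * w v \<le> K * P u * P (v - u)" if "v \<in> V" for v
      using that bound by (auto simp: V_def U_inf_def)
    then show "(\<lambda>v. C ^ (2 * card v) * w v) summable_on V"
      using assms(1) by (intro summable_on_comparison_test[OF bound_summable]) (auto simp: power_mult)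
  qed
  also have "\<dots> = K * P u * infsum P ((\<lambda>v. v - u) ` V)"
    by (simp add: infsum_cmult_right' infsum_reindex[OF inj] o_def)
  also have "\<dots> \<le> K * P u * infsum P U_inf"
    using assms(2,4) summable_on_subset[OF P_summable shifts]
    by (intro mult_left_mono infsum_mono2[OF _ P_summable shifts]) auto
  finally show ?thesis
    by (simp add: mult_ac)
qed

lemma decay_T_up_le_decay_singletons:
  assumes "w \<in> S_inf C" and "\<And>v. 0 \<le> w v" and "0 < C" and "\<And>j. 0 \<le> g j"
    and "0 < \<kappa>" and "\<And>j. \<kappa> * g j \<le> w {j}"
  shows "decay U_inf (T_up C w) \<le> decay UNIV g"
proof (rule decay_U_inf_le_decay_singletons[OF _ assms(4)])
  show "0 < C ^ 2 * \<kappa>"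
    using assms(3,5) by simp
  fix j
  have "C ^ 2 * (\<kappa> * g j) \<le> C ^ 2 * w {j}"
    using assms(6) by (simp add: mult_left_mono)
  also have "\<dots> \<le> T_up C w {j}"
    using T_up_ge[OF assms(1,2), of "{j}"] by (simp add: U_inf_def)
  finally show "C ^ 2 * \<kappa> * g j \<le> T_up C w {j}"
    by (simp add: mult.assoc)
qed

lemma pod_weights_le_fact_powr:
  fixes Gam g :: "nat \<Rightarrow> real"
  assumes "\<And>j. 0 \<le> g j" and "\<And>k. Gam k \<le> Ca * fact k powr a"
    and "0 \<le> Ca" and "0 \<le> a" and "0 \<le> B" and "B * 2 powr a \<le> M" and "finite v"
  shows "B ^ card v * pod_weights Gam g v \<le> Ca * pod_weights (\<lambda>k. M ^ k * fact k powr a) g v"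
  using pod_weights_split_le[OF assms(1-6) empty_subsetI assms(7)] by (simp add: pod_weights_def)

lemma pod_weights_in_S_inf:
  fixes Gam g :: "nat \<Rightarrow> real"
  assumes g_nonneg: "\<And>j. 0 \<le> g j" and Gam_nonneg: "\<And>k. 0 \<le> Gam k"
    and "\<And>k. Gam k \<le> Ca * fact k powr a" and "0 \<le> Ca" and "0 \<le> a"
    and "summable g" and "ereal a < decay UNIV g"
  shows "pod_weights Gam g \<in> S_inf C"
proof -
  define M where "M = (1 + C ^ 2) * 2 powr a"
  define P where "P = pod_weights (\<lambda>k. M ^ k * fact k powr a) g"
  have "P summable_on U_inf"
    unfolding P_def M_def using assms by (intro pod_weights_fact_powr_summable_on) (auto simp: add_pos_nonneg)
  then have "(\<lambda>v. C ^ (2 * card v) * pod_weights Gam g v) summable_on U_inf"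
  proof (rule summable_on_comparison_test[OF summable_on_cmult_right])
    show "C ^ (2 * card v) * pod_weights Gam g v \<le> Ca * P v" if "v \<in> U_inf" for v
      unfolding P_def power_mult using that assms
      by (intro pod_weights_le_fact_powr) (auto simp: U_inf_def M_def)
    show "0 \<le> C ^ (2 * card v) * pod_weights Gam g v" for v
      using pod_weights_nonneg[OF Gam_nonneg g_nonneg] by (simp add: power_mult)
  qed
  then show ?thesis
    unfolding S_inf_def by simp
qed

lemma decay_pod_weights:
  fixes Gam g :: "nat \<Rightarrow> real"
  assumes g_nonneg: "\<And>j. 0 \<le> g j" and Gam_nonneg: "\<And>k. 0 \<le> Gam k"
    and Gam_le: "\<And>k. Gam k \<le> Ca * fact k powr a" and "0 \<le> Ca" and "0 \<le> a" and "0 < Gam 1"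
    and "ereal a < decay UNIV g"
  shows "decay U_inf (pod_weights Gam g) = decay UNIV g"
proof (rule antisym)
  show "decay U_inf (pod_weights Gam g) \<le> decay UNIV g"
    using \<open>0 < Gam 1\<close> g_nonneg by (intro decay_U_inf_le_decay_singletons) (auto simp: pod_weights_def)
  have "decay UNIV g = decay U_inf (pod_weights (\<lambda>k. (2 powr a) ^ k * fact k powr a) g)"
    using g_nonneg assms(7) by (intro decay_pod_weights_fact_powr[symmetric]) auto
  also have "\<dots> \<le> decay U_inf (pod_weights Gam g)"
    using pod_weights_le_fact_powr[OF g_nonneg Gam_le \<open>0 \<le> Ca\<close> \<open>0 \<le> a\<close>, of 1]
      pod_weights_nonneg[OF Gam_nonneg g_nonneg] \<open>0 \<le> Ca\<close>
    by (intro decay_le_decay_of_le_mult) (auto simp: U_inf_def)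
  finally show "decay UNIV g \<le> decay U_inf (pod_weights Gam g)" .
qed

lemma decay_T_up_pod_weights:
  fixes Gam g :: "nat \<Rightarrow> real"
  assumes "0 < C" and g_nonneg: "\<And>j. 0 \<le> g j" and Gam_nonneg: "\<And>k. 0 \<le> Gam k"
    and "\<And>k. Gam k \<le> Ca * fact k powr a" and "0 \<le> Ca" and "0 \<le> a" and "0 < Gam 1"
    and "summable g" and "ereal a < decay UNIV g"
  shows "decay U_inf (T_up C (pod_weights Gam g)) = decay UNIV g"
proof (rule antisym)
  define \<gamma> where "\<gamma> = pod_weights Gam g"
  have \<gamma>_nonneg: "0 \<le> \<gamma> v" for v
    unfolding \<gamma>_def using Gam_nonneg g_nonneg by (rule pod_weights_nonneg)
  show "decay U_inf (T_up C \<gamma>) \<le> decay UNIV g"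
  proof (rule decay_T_up_le_decay_singletons[OF _ \<gamma>_nonneg _ g_nonneg])
    show "\<gamma> \<in> S_inf C"
      unfolding \<gamma>_def using assms by (intro pod_weights_in_S_inf) auto
    show "Gam 1 * g j \<le> \<gamma> {j}" for j
      by (simp add: \<gamma>_def pod_weights_def)
  qed (use \<open>0 < C\<close> \<open>0 < Gam 1\<close> in auto)
  define M where "M = C ^ 2 * 2 powr a"
  define P where "P = pod_weights (\<lambda>k. M ^ k * fact k powr a) g"
  have "0 < M"
    using \<open>0 < C\<close> by (simp add: M_def)
  have P_nonneg: "0 \<le> P v" for v
    unfolding P_def using \<open>0 < M\<close> g_nonneg by (intro pod_weights_nonneg) auto
  have "P summable_on U_inf"
    unfolding P_def using assms \<open>0 < M\<close> by (intro pod_weights_fact_powr_summable_on) auto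
  have "T_up C \<gamma> u \<le> Ca * infsum P U_inf * P u" for u
  proof (rule T_up_le[OF \<gamma>_nonneg P_nonneg \<open>P summable_on U_inf\<close> \<open>0 \<le> Ca\<close>])
    fix v assume "u \<subseteq> v" and "finite v"
    then show "C ^ (2 * card v) * \<gamma> v \<le> Ca * P u * P (v - u)"
      unfolding \<gamma>_def P_def power_mult using assms by (intro pod_weights_split_le) (auto simp: M_def)
  qed
  moreover have "0 \<le> T_up C \<gamma> u" for u
    using \<gamma>_nonneg by (rule T_up_nonneg)
  moreover have "0 \<le> Ca * infsum P U_inf"
    using \<open>0 \<le> Ca\<close> P_nonneg by (simp add: infsum_nonneg)
  ultimately have "decay U_inf P \<le> decay U_inf (T_up C \<gamma>)"
    by (intro decay_le_decay_of_le_mult)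
  moreover have "decay U_inf P = decay UNIV g"
    unfolding P_def using g_nonneg \<open>0 < M\<close> assms(9) by (rule decay_pod_weights_fact_powr)
  ultimately show "decay UNIV g \<le> decay U_inf (T_up C \<gamma>)"
    by simp
qed

theorem mainTheorem10:
  fixes C a Ca :: real and g Gam :: "nat \<Rightarrow> real"
  assumes "C > 0"
    and "antimono g" and "\<And>j. g j \<ge> 0"
    and "\<And>k. Gam k \<ge> 0"
    and "a > 0" and "Ca > 0" and "\<And>k. Gam k \<le> Ca * (fact k) powr a"
    and "Gam 1 > 0"
    and "decay UNIV g > ereal a"
    and "summable g"
  shows "pod_weights Gam g \<in> S_inf C
    \<and> decay U_inf (T_up C (pod_weights Gam g)) = decay U_inf (pod_weights Gam g)
    \<and> decay U_inf (pod_weights Gam g) = decay UNIV g"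
proof -
  have "0 \<le> Ca" and "0 \<le> a"
    using assms(5,6) by simp_all
  have "pod_weights Gam g \<in> S_inf C"
    by (rule pod_weights_in_S_inf[OF assms(3,4,7) \<open>0 \<le> Ca\<close> \<open>0 \<le> a\<close> assms(10,9)])
  moreover have "decay U_inf (pod_weights Gam g) = decay UNIV g"
    by (rule decay_pod_weights[OF assms(3,4,7) \<open>0 \<le> Ca\<close> \<open>0 \<le> a\<close> assms(8,9)])
  moreover have "decay U_inf (T_up C (pod_weights Gam g)) = decay UNIV g"
    by (rule decay_T_up_pod_weights[OF assms(1,3,4,7) \<open>0 \<le> Ca\<close> \<open>0 \<le> a\<close> assms(8,10,9)])
  ultimately show ?thesis
    by simp
qed

end
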